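(* Let $a, b, n$ be positive integers with $b>1$, $n>1$, and suppose $S_a(b,n)$ is a numerical semigroup (equivalently $\gcd(r_b(n),a)=1$). Then $\{a_1, \ldots, a_n\}$ is the minimal system of generators of $S_a(b,n)$; in particular the embedding dimension of $S_a(b,n)$ is $n$.
   Context: For an integer $\ell \ge 1$, $r_b(\ell) = \sum_{j=0}^{\ell-1} b^j$, and $r_b(0)=0$. For $i \ge 1$, $a_i := r_b(n) + a\, r_b(i-1)$. $S_a(b,n)$ is the submonoid of $\mathbb{N}$ generated by $\{a_i: i\ge 1\}$. The minimal system of generators of a numerical semigroup is the unique generating set no proper subset of which generates it; the embedding dimension is its cardinality. *)

theory Defs
  imports Main
begin

definition repunit :: "nat \<Rightarrow> nat \<Rightarrow> nat" where
  "repunit b l = (\<Sum>j<l. b ^ j)"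

definition agen :: "nat \<Rightarrow> nat \<Rightarrow> nat \<Rightarrow> nat \<Rightarrow> nat" where
  "agen a b n i = repunit b n + a * repunit b (i - 1)"

inductive_set monoid_gen :: "nat set \<Rightarrow> nat set" for A :: "nat set" where
  zero: "0 \<in> monoid_gen A"
| add: "x \<in> A \<Longrightarrow> y \<in> monoid_gen A \<Longrightarrow> x + y \<in> monoid_gen A"

definition S_sg :: "nat \<Rightarrow> nat \<Rightarrow> nat \<Rightarrow> nat set" where
  "S_sg a b n = monoid_gen {agen a b n i | i. i \<ge> 1}"

definition numerical_semigroup :: "nat set \<Rightarrow> bool" where
  "numerical_semigroup S \<longleftrightarrow> 0 \<in> S \<and> (\<forall>x\<in>S. \<forall>y\<in>S. x + y \<in> S) \<and> finite (UNIV - S)"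

definition minimal_system :: "nat set \<Rightarrow> nat set \<Rightarrow> bool" where
  "minimal_system S G \<longleftrightarrow> monoid_gen G = S \<and> (\<forall>H. H \<subset> G \<longrightarrow> monoid_gen H \<noteq> S)"

definition embedding_dim :: "nat set \<Rightarrow> nat" where
  "embedding_dim S = card (THE G. minimal_system S G)"

end

theory Submission
  imports Defs
begin

text \<open>
  Write \<open>R = r\<^sub>b(n)\<close>. Since \<open>r\<^sub>b(n+k-1) = r\<^sub>b(k-1) + b\<^sup>k\<^sup>-\<^sup>1 R\<close>, every \<open>a\<^sub>n\<^sub>+\<^sub>k\<close> is
  \<open>a\<^sub>k\<close> plus a multiple of \<open>a\<^sub>1 = R\<close>, so \<open>a\<^sub>1, \<dots>, a\<^sub>n\<close> generate the semigroup.
  Every element has the form \<open>cR + at\<close>, where \<open>c \<ge> 1\<close> counts the generators used. If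
  \<open>a\<^sub>i = R + a r\<^sub>b(i-1)\<close> with \<open>i \<le> n\<close> were a sum of two nonzero elements, comparing gives
  \<open>a (r\<^sub>b(i-1) - t) = cR\<close> with \<open>c \<ge> 1\<close>; as \<open>R\<close> and \<open>a\<close> are coprime (otherwise their gcd
  would divide every element), \<open>R\<close> divides the positive number \<open>r\<^sub>b(i-1) - t < R\<close>.
  So \<open>a\<^sub>1, \<dots>, a\<^sub>n\<close> are atoms, and a generating set of atoms is contained in every
  generating set.
\<close>

lemma monoid_gen_base: "x \<in> A \<Longrightarrow> x \<in> monoid_gen A"
  using monoid_gen.add[of x A 0] monoid_gen.zero by simp

lemma monoid_gen_add: "x \<in> monoid_gen A \<Longrightarrow> y \<in> monoid_gen A \<Longrightarrow> x + y \<in> monoid_gen A"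
  by (induction x rule: monoid_gen.induct) (auto simp: add.assoc intro: monoid_gen.add)

lemma monoid_gen_mult: "x \<in> monoid_gen A \<Longrightarrow> k * x \<in> monoid_gen A"
  by (induction k) (auto intro: monoid_gen.zero monoid_gen_add)

lemma monoid_gen_subset: "A \<subseteq> monoid_gen B \<Longrightarrow> monoid_gen A \<subseteq> monoid_gen B"
proof
  fix x assume "A \<subseteq> monoid_gen B" "x \<in> monoid_gen A"
  from this(2,1) show "x \<in> monoid_gen B"
    by (induction x rule: monoid_gen.induct) (auto intro: monoid_gen.zero monoid_gen_add)
qed

definition atom :: "nat set \<Rightarrow> nat \<Rightarrow> bool" where
  "atom S x \<longleftrightarrow> x \<in> S \<and> x \<noteq> 0 \<and> (\<forall>u\<in>S. \<forall>v\<in>S. u + v = x \<longrightarrow> u = 0 \<or> v = 0)"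

lemma atom_mem_generators:
  assumes "atom (monoid_gen G) x"
  shows "x \<in> G"
proof -
  have "x \<in> monoid_gen G" using assms by (simp add: atom_def)
  then show ?thesis using assms
  proof (induction x rule: monoid_gen.induct)
    case zero
    then show ?case by (simp add: atom_def)
  next
    case (add u v)
    show ?case
    proof (cases "u = 0")
      case True
      then show ?thesis using add by simp
    next
      case False
      then have "v = 0"
        using add.prems add.hyps monoid_gen_base[of u G] unfolding atom_def by blast
      then show ?thesis using add.hyps(1) by simp
    qed
  qed
qed

lemma minimal_system_iff_atom_generators:
  assumes "monoid_gen A = S" and "\<forall>x\<in>A. atom S x"
  shows "minimal_system S G \<longleftrightarrow> G = A"
proof -
  have contains_atoms: "A \<subseteq> G" if "monoid_gen G = S" for G
    using assms(2) that atom_mem_generators by blast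
  show ?thesis
  proof
    assume "minimal_system S G"
    then show "G = A"
      using contains_atoms assms(1) unfolding minimal_system_def by blast
  next
    assume "G = A"
    then show "minimal_system S G"
      using contains_atoms assms(1) unfolding minimal_system_def by blast
  qed
qed

lemma numerical_semigroup_common_divisor_eq_1:
  fixes d :: nat
  assumes "numerical_semigroup S" and "\<forall>s\<in>S. d dvd s"
  shows "d = 1"
proof -
  have "finite (UNIV - S)" using assms(1) by (simp add: numerical_semigroup_def)
  then obtain N where "\<forall>x \<in> UNIV - S. x < N" using finite_nat_set_iff_bounded by blast
  then have "N \<in> S" "Suc N \<in> S" by (metis Diff_iff UNIV_I less_irrefl, metis Diff_iff UNIV_I lessI less_asym)
  then have "d dvd Suc N - N" using assms(2) dvd_diff_nat by blast
  then show ?thesis by simp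
qed

lemma repunit_Suc: "repunit b (Suc l) = repunit b l + b ^ l"
  by (simp add: repunit_def)

lemma repunit_add: "repunit b (m + l) = repunit b m + b ^ m * repunit b l"
  by (induction l) (auto simp: repunit_def power_add algebra_simps)

lemma repunit_strict_mono:
  assumes "b > 0" shows "strict_mono (repunit b)"
  unfolding strict_mono_Suc_iff by (simp add: repunit_Suc assms)

lemma repunit_pos: "l > 0 \<Longrightarrow> repunit b l > 0"
  using repunit_add[of b 1 "l - 1"] by (simp add: repunit_def)

lemma agen_one: "agen a b n 1 = repunit b n"
  by (simp add: agen_def repunit_def)

lemma agen_add_index:
  assumes "k \<ge> 1"
  shows "agen a b n (n + k) = agen a b n k + (a * b ^ (k - 1)) * agen a b n 1"
proof -
  have "repunit b (n + k - 1) = repunit b (k - 1) + b ^ (k - 1) * repunit b n"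
    using assms repunit_add[of b "k - 1" n] by (simp add: add.commute)
  then show ?thesis unfolding agen_one by (simp add: agen_def algebra_simps)
qed

lemma inj_on_agen:
  assumes "a > 0" "b > 0"
  shows "inj_on (agen a b n) {1..n}"
proof
  fix i j assume "i \<in> {1..n}" "j \<in> {1..n}" "agen a b n i = agen a b n j"
  then have "repunit b (i - 1) = repunit b (j - 1)" "i \<ge> 1" "j \<ge> 1"
    using assms(1) by (auto simp: agen_def)
  then show "i = j" using strict_mono_eq[OF repunit_strict_mono[OF assms(2)]] by simp
qed

lemma S_sg_generated_by_first_n:
  assumes "n \<ge> 1"
  shows "monoid_gen (agen a b n ` {1..n}) = S_sg a b n"
proof -
  let ?A = "agen a b n ` {1..n}"
  have "agen a b n i \<in> monoid_gen ?A" if "i \<ge> 1" for i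
    using that
  proof (induction i rule: less_induct)
    case (less i)
    show ?case
    proof (cases "i \<le> n")
      case True
      then show ?thesis using less.prems by (auto intro: monoid_gen_base)
    next
      case False
      define k where "k = i - n"
      have k: "k \<ge> 1" "k < i" "i = n + k" using False assms unfolding k_def by auto
      have "agen a b n 1 \<in> monoid_gen ?A" using assms by (auto intro: monoid_gen_base)
      then show ?thesis
        using less.IH k by (simp add: agen_add_index monoid_gen_add monoid_gen_mult)
    qed
  qed
  then show ?thesis
    unfolding S_sg_def
    by (intro equalityI monoid_gen_subset) (auto 0 3 intro: monoid_gen_base)
qed

lemma S_sg_memE:
  assumes "s \<in> S_sg a b n"
  obtains c t where "s = c * repunit b n + a * t" and "c = 0 \<Longrightarrow> s = 0"
proof -
  from assms have "\<exists>c t. s = c * repunit b n + a * t \<and> (c = 0 \<longrightarrow> s = 0)"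
    unfolding S_sg_def
  proof (induction s rule: monoid_gen.induct)
    case (add x y)
    then obtain i c t where "x = agen a b n i" "y = c * repunit b n + a * t" by auto
    then have "x + y = Suc c * repunit b n + a * (t + repunit b (i - 1))"
      by (simp add: agen_def algebra_simps)
    then show ?case by blast
  qed auto
  then show ?thesis using that by blast
qed

lemma coprime_repunit_if_numerical_semigroup:
  assumes "numerical_semigroup (S_sg a b n)"
  shows "coprime (repunit b n) a"
proof -
  have "gcd (repunit b n) a dvd s" if s: "s \<in> S_sg a b n" for s
  proof -
    obtain c t where "s = c * repunit b n + a * t"
      using S_sg_memE[OF s] by blast
    then show ?thesis by simp
  qed
  then have "gcd (repunit b n) a = 1"
    using numerical_semigroup_common_divisor_eq_1[OF assms] by blast
  then show ?thesis by (simp add: coprime_iff_gcd_eq_1)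
qed

lemma atom_agen:
  assumes "coprime (repunit b n) a" "b > 0" "1 \<le> i" "i \<le> n"
  shows "atom (S_sg a b n) (agen a b n i)"
proof -
  define R where "R = repunit b n"
  define r where "r = repunit b (i - 1)"
  have "R > 0" using assms(3,4) by (simp add: R_def repunit_pos)
  have "r < R"
    using assms strict_monoD[OF repunit_strict_mono] by (simp add: r_def R_def)
  have x: "agen a b n i = R + a * r" by (simp add: agen_def r_def R_def)
  have "u = 0 \<or> v = 0"
    if u: "u \<in> S_sg a b n" and v: "v \<in> S_sg a b n" and sum: "u + v = R + a * r" for u v
  proof (rule ccontr)
    assume "\<not> (u = 0 \<or> v = 0)"
    with u v obtain c1 t1 c2 t2 where
      "u = c1 * R + a * t1" "v = c2 * R + a * t2" "c1 \<noteq> 0" "c2 \<noteq> 0"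
      unfolding R_def by (metis S_sg_memE)
    moreover from \<open>c1 \<noteq> 0\<close> obtain c' where "c1 = Suc c'" using not0_implies_Suc by blast
    ultimately obtain c t where "a * r = c * R + a * t" "c \<ge> 1"
      using sum \<open>c2 \<noteq> 0\<close> by (intro that[of "c' + c2" "t1 + t2"]) (auto simp: algebra_simps)
    moreover have "c * R > 0" using \<open>c \<ge> 1\<close> \<open>R > 0\<close> by simp
    ultimately have "a * t < a * r" by linarith
    then have "t < r" by simp
    have "a * (r - t) = c * R"
      using \<open>a * r = c * R + a * t\<close> by (simp add: diff_mult_distrib2)
    then have "R dvd r - t"
      using assms(1) by (metis R_def coprime_dvd_mult_right_iff dvd_triv_right)
    then show False using \<open>t < r\<close> \<open>r < R\<close> nat_dvd_not_less by fastforce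
  qed
  moreover have "agen a b n i \<in> S_sg a b n"
    using assms(3) by (auto simp: S_sg_def intro: monoid_gen_base)
  ultimately show ?thesis using \<open>R > 0\<close> x by (auto simp: atom_def)
qed

theorem theorem6:
  fixes a b n :: nat
  assumes "a > 0" "b > 1" "n > 1"
    and "numerical_semigroup (S_sg a b n)"
  shows "(\<forall>G. minimal_system (S_sg a b n) G \<longleftrightarrow> G = agen a b n ` {1..n})
         \<and> embedding_dim (S_sg a b n) = n"
proof -
  have minimal: "minimal_system (S_sg a b n) G \<longleftrightarrow> G = agen a b n ` {1..n}" for G
  proof (rule minimal_system_iff_atom_generators)
    show "monoid_gen (agen a b n ` {1..n}) = S_sg a b n"
      using assms(3) by (intro S_sg_generated_by_first_n) simp
    show "\<forall>x\<in>agen a b n ` {1..n}. atom (S_sg a b n) x"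
      using assms by (auto intro: atom_agen coprime_repunit_if_numerical_semigroup)
  qed
  then have "embedding_dim (S_sg a b n) = card (agen a b n ` {1..n})"
    unfolding embedding_dim_def by (metis the_equality)
  also have "\<dots> = n"
    using inj_on_agen[of a b n] assms by (simp add: card_image)
  finally show ?thesis using minimal by blast
qed

end
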